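(* Consider the control problem described in the context, let $\mathbf u^0(\cdot)\in\mathfrak U$ be an optimal control, and assume the problem is regular for $\mathbf u^0$. For $k=1,\dots,N$ let $\boldsymbol\theta_k$ be the solution of $$\tfrac{d}{dt}\boldsymbol\theta_k=-A^{\top}(t)\boldsymbol\theta_k,\qquad \boldsymbol\theta_k(1)=\nabla h_k\big(\mathbf z^{(k)}_{u^0}\big),$$ and set $\boldsymbol\theta(t)=\sum_{k=1}^N\chi_k(t)\boldsymbol\theta_k(t)$, where $\chi_k$ is the indicator function of $[t_{k-1},t_k)$. Then for almost all $t\in[0,1]$ $$\langle\boldsymbol\theta(t),B(t)\mathbf u^0(t)\rangle=\max_{\mathbf v\in\mathbf V}\langle\boldsymbol\theta(t),B(t)\mathbf v\rangle .$$
   Context: Let $(\Omega,\mathfrak F,\mathbf P)$ be a complete probability space, $\xi_1,\dots,\xi_N$ real random variables on it, and $0=t_0<t_1<\dots<t_N=1$. Define $\xi(t,\omega)=\xi_i(\omega)$ for $t\in[t_{i-1},t_i)$. Let $A(t)$, $B(t)$, $\mathbf f(t)$ be deterministic matrices of sizes $n\times n$, $n\times m$, $n\times1$ with Lebesgue-summable entries on $[0,1]$, entries of $B$ square-summable; $\mathbf x_0\in\mathbb R^n$ nonrandom; $\mathbf Q\subset\mathbb R^n$ a nonrandom Borel set. For a measurable deterministic control $\mathbf u(\cdot)\in L_2^m[0,1]$, $\mathbf x_u$ solves $\frac{d}{dt}\mathbf x=A(t)\mathbf x+\xi(t)B(t)\mathbf u(t)+\mathbf f(t)$, $\mathbf x(0)=\mathbf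 x_0$, and $\varphi(\mathbf u(\cdot))=\mathbf P(\mathbf x_u(1)\in\mathbf Q)$ is to be maximized over the set $\mathfrak U$ of admissible controls, i.e. measurable functions $[0,1]\to\mathbf V$ (in $L_2^m[0,1]$), $\mathbf V\subset\mathbb R^m$ fixed. Let $\Phi(t)$ be the fundamental matrix of $\dot{\mathbf x}=A(t)\mathbf x$ with $\Phi(0)=I$; put $\hat{\mathbf x}_0=\Phi(1)\big(\mathbf x_0+\int_0^1\Phi^{-1}(s)\mathbf f(s)ds\big)$ and $\mathbf z_u^{(i)}=\Phi(1)\int_{t_{i-1}}^{t_i}\Phi^{-1}(s)B(s)\mathbf u(s)\,ds$, so $\mathbf x_u(1)=\hat{\mathbf x}_0+\sum_i\xi_i\mathbf z_u^{(i)}$. For a control $\mathbf u^*$ and $k=1,\dots,N$ define $h_k:\mathbb R^n\to[0,1]$ by $h_k(\mathbf z)=\mathbf P\big(\hat{\mathbf x}_0+\sum_{i\neq k}\xi_i\mathbf z^{(i)}_{u^*}+\xi_k\mathbf z\in\mathbf Q\big)$. The problem is called regular for the control $\mathbf u^*$ if for every $k=1,\dots,N$ the function $h_k$ (built from $\mathbf u^*$) is (Fréchet) differentiable at the point $\mathbf z^{(k)}_{u^*}$; $\nabla h_k$ denotes its gradient. $A^\top$ is the transpose of $A$ and $\langle\cdot,\cdot\rangle$ the Euclidean inner product. *)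

theory Defs
  imports "HOL-Probability.Probability"
begin

text \<open>Fundamental matrix of dx/dt = A(t) x with Phi(0) = I, in the Caratheodory
  sense: continuous on [0,1] and satisfying the integral equation.\<close>
definition is_fundamental_matrix ::
  "(real \<Rightarrow> real^'n^'n) \<Rightarrow> (real \<Rightarrow> real^'n^'n) \<Rightarrow> bool" where
  "is_fundamental_matrix A Phi \<longleftrightarrow>
     continuous_on {0..1} Phi \<and>
     (\<forall>t\<in>{0..1}. Phi t = mat 1 + (LINT s:{0..t}|lebesgue. A s ** Phi s))"

definition is_adjoint_solution ::
  "(real \<Rightarrow> real^'n^'n) \<Rightarrow> real^'n \<Rightarrow> (real \<Rightarrow> real^'n) \<Rightarrow> bool" where
  "is_adjoint_solution A g theta \<longleftrightarrow>
     continuous_on {0..1} theta \<and>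
     (\<forall>t\<in>{0..1}. theta t = g + (LINT s:{t..1}|lebesgue. transpose (A s) *v theta s))"

definition xhat0 ::
  "(real \<Rightarrow> real^'n^'n) \<Rightarrow> (real \<Rightarrow> real^'n) \<Rightarrow> real^'n \<Rightarrow> real^'n" where
  "xhat0 Phi f x0 = Phi 1 *v (x0 + (LINT s:{0..1}|lebesgue. matrix_inv (Phi s) *v f s))"

definition zvec ::
  "(real \<Rightarrow> real^'n^'n) \<Rightarrow> (real \<Rightarrow> real^'m^'n) \<Rightarrow> (nat \<Rightarrow> real)
     \<Rightarrow> (real \<Rightarrow> real^'m) \<Rightarrow> nat \<Rightarrow> real^'n" where
  "zvec Phi B ts u i =
     Phi 1 *v (LINT s:{ts (i - 1)..<ts i}|lebesgue. (matrix_inv (Phi s) ** B s) *v u s)"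

definition x_end ::
  "nat \<Rightarrow> (nat \<Rightarrow> 'w \<Rightarrow> real) \<Rightarrow> (nat \<Rightarrow> real) \<Rightarrow> (real \<Rightarrow> real^'n^'n)
     \<Rightarrow> (real \<Rightarrow> real^'m^'n) \<Rightarrow> (real \<Rightarrow> real^'n) \<Rightarrow> real^'n
     \<Rightarrow> (real \<Rightarrow> real^'m) \<Rightarrow> 'w \<Rightarrow> real^'n" where
  "x_end N xi ts Phi B f x0 u \<omega> =
     xhat0 Phi f x0 + (\<Sum>i\<in>{1..N}. xi i \<omega> *\<^sub>R zvec Phi B ts u i)"

definition objective ::
  "'w measure \<Rightarrow> nat \<Rightarrow> (nat \<Rightarrow> 'w \<Rightarrow> real) \<Rightarrow> (nat \<Rightarrow> real) \<Rightarrow> (real \<Rightarrow> real^'n^'n)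
     \<Rightarrow> (real \<Rightarrow> real^'m^'n) \<Rightarrow> (real \<Rightarrow> real^'n) \<Rightarrow> real^'n \<Rightarrow> (real^'n) set
     \<Rightarrow> (real \<Rightarrow> real^'m) \<Rightarrow> real" where
  "objective M N xi ts Phi B f x0 Q u =
     measure M {\<omega> \<in> space M. x_end N xi ts Phi B f x0 u \<omega> \<in> Q}"

definition hfun ::
  "'w measure \<Rightarrow> nat \<Rightarrow> (nat \<Rightarrow> 'w \<Rightarrow> real) \<Rightarrow> (nat \<Rightarrow> real) \<Rightarrow> (real \<Rightarrow> real^'n^'n)
     \<Rightarrow> (real \<Rightarrow> real^'m^'n) \<Rightarrow> (real \<Rightarrow> real^'n) \<Rightarrow> real^'n \<Rightarrow> (real^'n) set
     \<Rightarrow> (real \<Rightarrow> real^'m) \<Rightarrow> nat \<Rightarrow> real^'n \<Rightarrow> real" where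
  "hfun M N xi ts Phi B f x0 Q u k z =
     measure M {\<omega> \<in> space M.
        xhat0 Phi f x0 + (\<Sum>i\<in>{1..N} - {k}. xi i \<omega> *\<^sub>R zvec Phi B ts u i)
          + xi k \<omega> *\<^sub>R z \<in> Q}"

definition admissible :: "(real^'m) set \<Rightarrow> (real \<Rightarrow> real^'m) \<Rightarrow> bool" where
  "admissible V u \<longleftrightarrow>
     (\<forall>t\<in>{0..1}. u t \<in> V) \<and> set_borel_measurable lebesgue {0..1} u \<and>
     set_integrable lebesgue {0..1} (\<lambda>t. (norm (u t))\<^sup>2)"

definition gradient :: "('a::real_inner \<Rightarrow> real) \<Rightarrow> 'a \<Rightarrow> 'a" where
  "gradient h z = (THE g. (h has_derivative (\<lambda>v. g \<bullet> v)) (at z))"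

definition regular_for ::
  "'w measure \<Rightarrow> nat \<Rightarrow> (nat \<Rightarrow> 'w \<Rightarrow> real) \<Rightarrow> (nat \<Rightarrow> real) \<Rightarrow> (real \<Rightarrow> real^'n^'n)
     \<Rightarrow> (real \<Rightarrow> real^'m^'n) \<Rightarrow> (real \<Rightarrow> real^'n) \<Rightarrow> real^'n \<Rightarrow> (real^'n) set
     \<Rightarrow> (real \<Rightarrow> real^'m) \<Rightarrow> bool" where
  "regular_for M N xi ts Phi B f x0 Q u \<longleftrightarrow>
     (\<forall>k\<in>{1..N}. hfun M N xi ts Phi B f x0 Q u k differentiable (at (zvec Phi B ts u k)))"

end

theory Submission
  imports Defs
begin

(* Suppose the maximum condition fails on a set of positive measure. Since V has a countable dense
   subset, there are a cell [t_(k-1), t_k) and a v in V such that theta_k(t) . B(t)(v - u0(t)) > 0 on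
   a non-null set E. Replace u0 by v on a subset T of E of small positive measure (a needle
   variation). Only z^(k) changes, by Phi(1) int_T Phi^-1 B (v - u0), so the objective becomes h_k
   at a nearby point, and its first-order change is grad h_k . Phi(1) int_T Phi^-1 B (v - u0) =
   int_T theta_k . B (v - u0) > 0, which contradicts optimality. The last equality holds because
   theta_k(t) . Phi(t) x is constant in t; that Phi(t) is invertible follows from uniqueness for
   linear integral equations. *)

section \<open>Matrices\<close>

lemma norm_matrix_vector_mult_le:
  fixes A :: "real^'n^'m"
  shows "norm (A *v x) \<le> real CARD('m) * real CARD('n) * norm A * norm x"
proof -
  have "onorm ((*v) A) \<le> real CARD('m) * real CARD('n) * norm A"
    by (rule onorm_le_matrix_component)
      (metis Finite_Cartesian_Product.norm_nth_le order_trans real_norm_def)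
  with onorm[OF matrix_vector_mul_bounded_linear, of A x] show ?thesis
    by (meson mult_right_mono norm_ge_zero order_trans)
qed

lemma bilinear_matrix_vector_mult: "bilinear (\<lambda>(A::real^'n^'m) x. A *v x)"
proof -
  have "linear (\<lambda>A::real^'n^'m. A *v x)" for x
    by (rule linearI) (simp_all add: matrix_vector_mult_add_rdistrib scaleR_matrix_vector_assoc)
  then show ?thesis by (simp add: bilinear_def)
qed

lemma bilinear_matrix_matrix_mult: "bilinear (\<lambda>(A::real^'n^'m) (B::real^'k^'n). A ** B)"
proof -
  have "linear (\<lambda>A::real^'n^'m. A ** B)" for B :: "real^'k^'n"
  proof (rule linearI)
    show "(A1 + A2) ** B = A1 ** B + A2 ** B" for A1 A2 :: "real^'n^'m"
      by (vector matrix_matrix_mult_def sum.distrib[symmetric] field_simps)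
  qed (simp add: scalar_matrix_assoc)
  moreover have "linear (\<lambda>B::real^'k^'n. A ** B)" for A :: "real^'n^'m"
    by (rule linearI) (simp_all add: matrix_add_ldistrib matrix_scalar_ac scalar_matrix_assoc)
  ultimately show ?thesis by (simp add: bilinear_def)
qed

lemma bilinear_swap: "bilinear h \<Longrightarrow> bilinear (\<lambda>x y. h y x)"
  by (simp add: bilinear_def)

lemma continuous_on_matrix_vector_mult [continuous_intros]:
  fixes f :: "'a::topological_space \<Rightarrow> real^'n^'m"
  shows "continuous_on S f \<Longrightarrow> continuous_on S g \<Longrightarrow> continuous_on S (\<lambda>s. f s *v g s)"
  using bilinear_matrix_vector_mult[unfolded bilinear_conv_bounded_bilinear]
  by (rule bounded_bilinear.continuous_on)

lemma matrix_inv_invertible: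
  fixes A :: "real^'n^'n"
  assumes "invertible A"
  shows "A ** matrix_inv A = mat 1" "matrix_inv A ** A = mat 1"
proof -
  have "\<exists>A'. A ** A' = mat 1 \<and> A' ** A = mat 1" using assms unfolding invertible_def by blast
  then have "A ** matrix_inv A = mat 1 \<and> matrix_inv A ** A = mat 1"
    unfolding matrix_inv_def by (rule someI_ex)
  then show "A ** matrix_inv A = mat 1" "matrix_inv A ** A = mat 1" by auto
qed

lemma matrix_inv_cramer:
  fixes A :: "real^'n^'n"
  assumes "invertible A"
  shows "matrix_inv A = (\<chi> k j. det (\<chi> i l. if l = k then axis j 1 $ i else A $ i $ l) / det A)"
proof -
  have "det A \<noteq> 0" using assms by (simp add: invertible_det_nz[symmetric])
  moreover have "A *v (matrix_inv A *v axis j 1) = axis j 1" for j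
    using matrix_inv_invertible(1)[OF assms] by (simp add: matrix_vector_mul_assoc)
  ultimately have "matrix_inv A *v axis j 1 =
      (\<chi> k. det (\<chi> i l. if l = k then axis j 1 $ i else A $ i $ l) / det A)" for j
    using cramer by blast
  moreover have "(matrix_inv A *v axis j 1) $ k = matrix_inv A $ k $ j" for k j
    by (simp add: matrix_vector_mult_def axis_def if_distrib cong: if_cong)
  ultimately show ?thesis by (simp add: vec_eq_iff)
qed

lemma continuous_on_matrix_inv:
  fixes A :: "real \<Rightarrow> real^'n^'n"
  assumes "continuous_on S A" and "\<And>s. s \<in> S \<Longrightarrow> invertible (A s)"
  shows "continuous_on S (\<lambda>s. matrix_inv (A s))"
proof -
  have det: "continuous_on S (\<lambda>s. det (P s))" if "continuous_on S P" for P :: "real \<Rightarrow> real^'n^'n"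
    using that unfolding det_def by (intro continuous_intros)
  have minors: "continuous_on S (\<lambda>s. \<chi> i l. if l = k then axis j 1 $ i else A s $ i $ l)" for k j
    by (intro continuous_on_vec_lambda, rename_tac i l, case_tac "l = k")
      (auto intro!: continuous_intros assms(1))
  have "\<forall>s\<in>S. det (A s) \<noteq> 0" using assms(2) by (simp add: invertible_det_nz[symmetric])
  then have "continuous_on S
      (\<lambda>s. \<chi> k j. det (\<chi> i l. if l = k then axis j 1 $ i else A s $ i $ l) / det (A s))"
    by (intro continuous_on_vec_lambda continuous_on_divide[OF det[OF minors] det[OF assms(1)]])
  then show ?thesis
    by (rule continuous_on_eq) (simp add: matrix_inv_cramer assms(2))
qed

section \<open>Integrals\<close>

lemma absolutely_integrable_on_cart_iff:
  fixes f :: "'a::euclidean_space \<Rightarrow> 'b::euclidean_space ^'n"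
  shows "f absolutely_integrable_on S \<longleftrightarrow> (\<forall>i. (\<lambda>s. f s $ i) absolutely_integrable_on S)"
proof -
  have "(\<forall>b\<in>Basis. (\<lambda>s. f s \<bullet> b) absolutely_integrable_on S) \<longleftrightarrow>
        (\<forall>i. \<forall>b\<in>Basis. (\<lambda>s. f s $ i \<bullet> b) absolutely_integrable_on S)"
    by (auto simp: Basis_vec_def inner_axis)
  then show ?thesis
    by (simp add: absolutely_integrable_componentwise_iff[where f = f]
        absolutely_integrable_componentwise_iff[where f = "\<lambda>s. f s $ _"])
qed

lemma absolutely_integrable_bilinear_continuous:
  fixes h :: "'a::euclidean_space \<Rightarrow> 'b::euclidean_space \<Rightarrow> 'c::euclidean_space"
  assumes "bilinear h" "continuous_on S f" "compact S" "g absolutely_integrable_on S"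
  shows "(\<lambda>x. h (f x) (g x)) absolutely_integrable_on S"
proof -
  have S: "S \<in> sets lebesgue" using assms(3) by (simp add: lmeasurable_compact fmeasurableD)
  show ?thesis
    by (rule absolutely_integrable_bounded_measurable_product[OF assms(1)
          continuous_imp_measurable_on_sets_lebesgue[OF assms(2) S] S _ assms(4)])
      (simp add: assms compact_continuous_image compact_imp_bounded)
qed

lemma set_integrable_mult_of_squares:
  fixes f g :: "real \<Rightarrow> real"
  assumes "set_borel_measurable lebesgue S f" "set_borel_measurable lebesgue S g"
    "set_integrable lebesgue S (\<lambda>x. (f x)\<^sup>2)" "set_integrable lebesgue S (\<lambda>x. (g x)\<^sup>2)"
  shows "set_integrable lebesgue S (\<lambda>x. f x * g x)"
proof (rule set_integrable_bound[OF set_integral_add(1)[OF assms(3,4)]])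
  have "(\<lambda>x. (indicator S x *\<^sub>R f x) * (indicator S x *\<^sub>R g x)) \<in> borel_measurable lebesgue"
    using assms(1,2) unfolding set_borel_measurable_def by measurable
  moreover have "(\<lambda>x. (indicator S x *\<^sub>R f x) * (indicator S x *\<^sub>R g x)) =
      (\<lambda>x. indicator S x *\<^sub>R (f x * g x))"
    by (auto simp: indicator_def)
  ultimately show "set_borel_measurable lebesgue S (\<lambda>x. f x * g x)"
    unfolding set_borel_measurable_def by simp
  have "\<bar>f x * g x\<bar> \<le> (f x)\<^sup>2 + (g x)\<^sup>2" for x
  proof -
    have "2 * (\<bar>f x\<bar> * \<bar>g x\<bar>) \<le> (f x)\<^sup>2 + (g x)\<^sup>2"
      using sum_squares_bound[of "\<bar>f x\<bar>" "\<bar>g x\<bar>"] by (simp add: power2_abs mult.assoc)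
    moreover have "0 \<le> \<bar>f x\<bar> * \<bar>g x\<bar>" by simp
    ultimately show ?thesis unfolding abs_mult by linarith
  qed
  then show "AE x\<in>S in lebesgue. norm (f x * g x) \<le> norm ((f x)\<^sup>2 + (g x)\<^sup>2)" by simp
qed

lemma absolutely_integrable_matrix_vector_mult_L2:
  fixes B :: "real \<Rightarrow> real^'m^'n" and u :: "real \<Rightarrow> real^'m"
  assumes B: "\<And>i j. set_integrable lebesgue S (\<lambda>s. B s $ i $ j)"
    "\<And>i j. set_integrable lebesgue S (\<lambda>s. (B s $ i $ j)\<^sup>2)"
    and u: "set_borel_measurable lebesgue S u" "set_integrable lebesgue S (\<lambda>t. (norm (u t))\<^sup>2)"
  shows "(\<lambda>s. B s *v u s) absolutely_integrable_on S"
proof -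
  have uj: "set_borel_measurable lebesgue S (\<lambda>s. u s $ j)" for j
    using measurable_compose[OF u(1)[unfolded set_borel_measurable_def] borel_measurable_nth[of j]]
    unfolding set_borel_measurable_def by simp
  have uj2: "set_integrable lebesgue S (\<lambda>s. (u s $ j)\<^sup>2)" for j
  proof (rule set_integrable_bound[OF u(2)])
    have "(\<lambda>x. (indicator S x *\<^sub>R u x $ j)\<^sup>2) \<in> borel_measurable lebesgue"
      using uj[of j] unfolding set_borel_measurable_def by measurable
    moreover have "(\<lambda>x. (indicator S x *\<^sub>R u x $ j)\<^sup>2) = (\<lambda>x. indicator S x *\<^sub>R (u x $ j)\<^sup>2)"
      by (auto simp: indicator_def)
    ultimately show "set_borel_measurable lebesgue S (\<lambda>s. (u s $ j)\<^sup>2)"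
      unfolding set_borel_measurable_def by simp
    have "(u x $ j)\<^sup>2 \<le> (norm (u x))\<^sup>2" for x
      using component_le_norm_cart[of "u x" j] by (metis abs_ge_zero power2_abs power_mono)
    then show "AE x\<in>S in lebesgue. norm ((u x $ j)\<^sup>2) \<le> norm ((norm (u x))\<^sup>2)" by simp
  qed
  have Bij: "set_borel_measurable lebesgue S (\<lambda>s. B s $ i $ j)" for i j
    using B(1) unfolding set_integrable_def set_borel_measurable_def by (rule borel_measurable_integrable)
  have "(\<lambda>s. \<Sum>j\<in>UNIV. B s $ i $ j * u s $ j) absolutely_integrable_on S" for i
    by (intro absolutely_integrable_sum set_integrable_mult_of_squares Bij uj B(2) uj2) auto
  then show ?thesis
    by (simp add: absolutely_integrable_on_cart_iff matrix_vector_mult_def)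
qed

lemma set_integral_null_set:
  fixes f :: "'a \<Rightarrow> 'b::{banach, second_countable_topology}"
  assumes "S \<in> null_sets M"
  shows "(LINT x:S|M. f x) = 0"
proof -
  have "AE x in M. indicator S x *\<^sub>R f x = 0"
    using AE_not_in[OF assms] by eventually_elim simp
  then show ?thesis unfolding set_lebesgue_integral_def by (rule integral_eq_zero_AE)
qed

lemma set_integral_bounds:
  fixes H :: "'a \<Rightarrow> 'b::euclidean_space"
  assumes T: "T \<in> fmeasurable M" and H: "set_integrable M T H"
    and bounds: "\<And>s. s \<in> T \<Longrightarrow> \<alpha> \<le> g \<bullet> H s" "\<And>s. s \<in> T \<Longrightarrow> norm (H s) \<le> \<beta>"
  shows "\<alpha> * measure M T \<le> g \<bullet> (LINT s:T|M. H s)" "norm (LINT s:T|M. H s) \<le> \<beta> * measure M T"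
proof -
  have T': "T \<in> sets M" "emeasure M T \<noteq> \<infinity>" using T by (auto simp: fmeasurable_def)
  have "integrable M (indicat_real T)"
    using T' by (simp add: integrable_indicator_iff sets.Int_space_eq2 less_top[symmetric])
  then have const: "set_integrable M T (\<lambda>_. c)" "(LINT s:T|M. c) = c * measure M T" for c :: real
    using set_integral_const[OF T', of c]
    by (simp_all add: set_integrable_def mult.commute)
  have "(LINT s:T|M. g \<bullet> H s) = (LINT s|M. g \<bullet> (indicator T s *\<^sub>R H s))"
    unfolding set_lebesgue_integral_def by simp
  also have "\<dots> = g \<bullet> (LINT s:T|M. H s)"
    unfolding set_lebesgue_integral_def
    by (rule integral_inner_right) (use H in \<open>simp add: set_integrable_def\<close>)
  moreover have "set_integrable M T (\<lambda>s. g \<bullet> H s)"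
    using integrable_inner_right[OF H[unfolded set_integrable_def], of g]
    unfolding set_integrable_def by simp
  ultimately show "\<alpha> * measure M T \<le> g \<bullet> (LINT s:T|M. H s)"
    using set_integral_mono[OF const(1), of "\<lambda>s. g \<bullet> H s" \<alpha>] bounds(1) const(2) by simp
  have "set_integrable M T (\<lambda>s. norm (H s))"
    using integrable_norm[OF H[unfolded set_integrable_def]] unfolding set_integrable_def by simp
  then show "norm (LINT s:T|M. H s) \<le> \<beta> * measure M T"
    using set_integral_norm_bound[OF H] set_integral_mono[OF _ const(1), of "\<lambda>s. norm (H s)" \<beta>]
      bounds(2) const(2) by (simp add: mult.commute)
qed

lemma integral_small_on_short_intervals:
  fixes f :: "real \<Rightarrow> real"
  assumes "f integrable_on {a..b}" "e > 0"
  obtains d where "d > 0"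
    "\<And>u v. a \<le> u \<Longrightarrow> u \<le> v \<Longrightarrow> v \<le> b \<Longrightarrow> v - u < d \<Longrightarrow> \<bar>integral {u..v} f\<bar> < e"
proof -
  have "uniformly_continuous_on {a..b} (\<lambda>x. integral {a..x} f)"
    by (intro compact_uniformly_continuous indefinite_integral_continuous_1 assms(1)) simp
  then obtain d where "d > 0" and d: "\<And>x x'. x \<in> {a..b} \<Longrightarrow> x' \<in> {a..b} \<Longrightarrow> dist x' x < d \<Longrightarrow>
      dist (integral {a..x'} f) (integral {a..x} f) < e"
    using assms(2) unfolding uniformly_continuous_on_def by metis
  show ?thesis
  proof (rule that[OF \<open>d > 0\<close>])
    fix u v assume uv: "a \<le> u" "u \<le> v" "v \<le> b" "v - u < d"
    have "integral {a..u} f + integral {u..v} f = integral {a..v} f"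
      by (intro Henstock_Kurzweil_Integration.integral_combine uv
          integrable_on_subinterval[OF assms(1)]) (use uv in auto)
    moreover have "dist (integral {a..v} f) (integral {a..u} f) < e"
      by (rule d) (use uv in \<open>auto simp: dist_real_def\<close>)
    ultimately show "\<bar>integral {u..v} f\<bar> < e" by (simp add: dist_real_def)
  qed
qed

lemma increment_of_integral_from_left:
  fixes F X :: "real \<Rightarrow> 'a::euclidean_space"
  assumes F: "F absolutely_integrable_on {a..b}"
    and X: "\<And>t. t \<in> {a..b} \<Longrightarrow> X t = X0 + (LINT s:{a..t}|lebesgue. F s)"
    and "a \<le> u" "u \<le> v" "v \<le> b"
  shows "X v - X u = integral {u..v} F"
proof -
  have LINT: "(LINT s:{a..t}|lebesgue. F s) = integral {a..t} F" if "t \<in> {a..b}" for t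
    using that by (intro set_lebesgue_integral_eq_integral(2) set_integrable_subset[OF F]) auto
  have "integral {a..u} F + integral {u..v} F = integral {a..v} F"
    using assms(3-5) by (intro Henstock_Kurzweil_Integration.integral_combine
        integrable_on_subinterval[OF set_lebesgue_integral_eq_integral(1)[OF F]]) auto
  then have "integral {u..v} F = integral {a..v} F - integral {a..u} F"
    by (metis add_diff_cancel_left')
  then show ?thesis using X[of u] X[of v] LINT[of u] LINT[of v] assms(3-5) by auto
qed

lemma increment_of_integral_to_right:
  fixes F X :: "real \<Rightarrow> 'a::euclidean_space"
  assumes F: "F absolutely_integrable_on {a..b}"
    and X: "\<And>t. t \<in> {a..b} \<Longrightarrow> X t = X1 + (LINT s:{t..b}|lebesgue. F s)"
    and "a \<le> u" "u \<le> v" "v \<le> b"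
  shows "X u - X v = integral {u..v} F"
proof -
  have LINT: "(LINT s:{t..b}|lebesgue. F s) = integral {t..b} F" if "t \<in> {a..b}" for t
    using that by (intro set_lebesgue_integral_eq_integral(2) set_integrable_subset[OF F]) auto
  have "integral {u..v} F + integral {v..b} F = integral {u..b} F"
    using assms(3-5) by (intro Henstock_Kurzweil_Integration.integral_combine
        integrable_on_subinterval[OF set_lebesgue_integral_eq_integral(1)[OF F]]) auto
  then have "integral {u..v} F = integral {u..b} F - integral {v..b} F"
    by (metis add_diff_cancel_right')
  then show ?thesis using X[of u] X[of v] LINT[of u] LINT[of v] assms(3-5) by auto
qed

section \<open>Linear integral equations\<close>

lemma spread_along_interval:
  fixes P :: "real \<Rightarrow> bool"
  assumes "d > 0" "t0 \<in> {a..b}" "P t0"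
    and spread: "\<And>u v. a \<le> u \<Longrightarrow> u \<le> v \<Longrightarrow> v \<le> b \<Longrightarrow> v - u < d \<Longrightarrow> P u \<or> P v \<Longrightarrow>
      \<forall>t\<in>{u..v}. P t"
  shows "\<forall>t\<in>{a..b}. P t"
proof -
  have reach: "\<forall>t\<in>{a..b}. \<bar>t - t0\<bar> \<le> real j * (d/2) \<longrightarrow> P t" for j :: nat
  proof (induction j)
    case 0
    then show ?case using assms(3) by auto
  next
    case (Suc j)
    show ?case
    proof (intro ballI impI)
      fix t assume t: "t \<in> {a..b}" and near: "\<bar>t - t0\<bar> \<le> real (Suc j) * (d/2)"
      have "0 \<le> real j * (d/2)" using \<open>d > 0\<close> by simp
      show "P t"
      proof (cases "t0 \<le> t")
        case True
        define c where "c = max t0 (t - d/2)"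
        have "c \<in> {a..b}" "\<bar>c - t0\<bar> \<le> real j * (d/2)"
          using t assms(2) True near \<open>0 \<le> real j * (d/2)\<close> \<open>d > 0\<close>
          unfolding c_def by (auto simp: algebra_simps max_def)
        then show ?thesis using Suc.IH spread[of c t] t \<open>d > 0\<close> True unfolding c_def by auto
      next
        case False
        define c where "c = min t0 (t + d/2)"
        have "c \<in> {a..b}" "\<bar>c - t0\<bar> \<le> real j * (d/2)"
          using t assms(2) False near \<open>0 \<le> real j * (d/2)\<close> \<open>d > 0\<close>
          unfolding c_def by (auto simp: algebra_simps min_def)
        then show ?thesis using Suc.IH spread[of t c] t \<open>d > 0\<close> False unfolding c_def by auto
      qed
    qed
  qed
  obtain j :: nat where "2 * (b - a) / d \<le> real j" using real_arch_simple by blast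
  then have "b - a \<le> real j * (d/2)" using \<open>d > 0\<close> by (simp add: field_simps)
  then show ?thesis using reach[of j] assms(2) by (auto simp: abs_if)
qed

lemma linear_ode_zero_on_short_interval:
  fixes A :: "real \<Rightarrow> real^'n^'n" and y :: "real \<Rightarrow> real^'n"
  assumes y: "continuous_on {t1..t2} y" "(\<lambda>s. A s *v y s) integrable_on {t1..t2}"
    and incr: "\<And>u v. t1 \<le> u \<Longrightarrow> u \<le> v \<Longrightarrow> v \<le> t2 \<Longrightarrow> y v - y u = integral {u..v} (\<lambda>s. A s *v y s)"
    and w: "w integrable_on {t1..t2}" "integral {t1..t2} w \<le> 1/2"
      "\<And>s x. s \<in> {t1..t2} \<Longrightarrow> norm (A s *v x) \<le> w s * norm x"
    and w_nonneg: "\<And>s. s \<in> {t1..t2} \<Longrightarrow> 0 \<le> w s"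
    and "t1 \<le> t2" "y t1 = 0 \<or> y t2 = 0"
  shows "\<forall>t\<in>{t1..t2}. y t = 0"
proof -
  have "continuous_on {t1..t2} (\<lambda>t. norm (y t))" using y(1) by (rule continuous_on_norm)
  then obtain tm where tm: "tm \<in> {t1..t2}" and max: "\<And>t. t \<in> {t1..t2} \<Longrightarrow> norm (y t) \<le> norm (y tm)"
    using continuous_attains_sup[of "{t1..t2}" "\<lambda>t. norm (y t)"] \<open>t1 \<le> t2\<close> by auto
  define m where "m = norm (y tm)"
  have "0 \<le> m" unfolding m_def by simp
  have increment: "norm (y v - y u) \<le> m / 2" if uv: "t1 \<le> u" "u \<le> v" "v \<le> t2" for u v
  proof -
    have "norm (y v - y u) \<le> integral {u..v} (\<lambda>s. m * w s)"
      unfolding incr[OF uv]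
    proof (rule integral_norm_bound_integral)
      show "(\<lambda>s. A s *v y s) integrable_on {u..v}" "(\<lambda>s. m * w s) integrable_on {u..v}"
        by (intro integrable_on_mult_right integrable_on_subinterval[OF y(2)]
            integrable_on_subinterval[OF w(1)], use uv in auto)+
      fix s assume "s \<in> {u..v}"
      then have "s \<in> {t1..t2}" "norm (y s) \<le> m" unfolding m_def using max uv by auto
      then show "norm (A s *v y s) \<le> m * w s"
        using w(3)[of s "y s"] w_nonneg[of s] by (metis mult.commute mult_left_mono order_trans)
    qed
    also have "\<dots> = m * integral {u..v} w" by (rule integral_mult_right)
    also have "\<dots> \<le> m * integral {t1..t2} w"
      by (intro mult_left_mono integral_subset_le integrable_on_subinterval[OF w(1)] \<open>0 \<le> m\<close>)
        (use uv w_nonneg in auto)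
    also have "\<dots> \<le> m / 2" using mult_left_mono[OF w(2) \<open>0 \<le> m\<close>] by simp
    finally show ?thesis .
  qed
  have "m \<le> m / 2"
    using \<open>y t1 = 0 \<or> y t2 = 0\<close> increment[of t1 tm] increment[of tm t2] tm unfolding m_def by auto
  then have "m = 0" unfolding m_def by simp
  then show ?thesis using max unfolding m_def by (metis norm_le_zero_iff)
qed

lemma linear_ode_unique:
  fixes A :: "real \<Rightarrow> real^'n^'n" and y :: "real \<Rightarrow> real^'n"
  assumes A: "A absolutely_integrable_on {a..b}" and y: "continuous_on {a..b} y"
    and incr: "\<And>u v. a \<le> u \<Longrightarrow> u \<le> v \<Longrightarrow> v \<le> b \<Longrightarrow> y v - y u = integral {u..v} (\<lambda>s. A s *v y s)"
    and "t0 \<in> {a..b}" "y t0 = 0"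
  shows "\<forall>t\<in>{a..b}. y t = 0"
proof -
  define w where "w s = real CARD('n) * real CARD('n) * norm (A s)" for s
  have w: "w integrable_on {a..b}"
    unfolding w_def by (intro integrable_on_mult_right set_lebesgue_integral_eq_integral(1))
      (use absolutely_integrable_norm[OF A] in \<open>simp add: o_def\<close>)
  have Ay: "(\<lambda>s. A s *v y s) integrable_on {a..b}"
    by (intro set_lebesgue_integral_eq_integral(1) absolutely_integrable_bilinear_continuous[OF
          bilinear_swap[OF bilinear_matrix_vector_mult] y _ A]) simp
  obtain d where "d > 0" and d: "\<And>u v. a \<le> u \<Longrightarrow> u \<le> v \<Longrightarrow> v \<le> b \<Longrightarrow> v - u < d \<Longrightarrow>
      \<bar>integral {u..v} w\<bar> < 1/2"
    using integral_small_on_short_intervals[OF w, of "1/2"] by auto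
  show ?thesis
  proof (rule spread_along_interval[where P = "\<lambda>t. y t = 0", OF \<open>d > 0\<close> assms(4,5)])
    fix u v assume uv: "a \<le> u" "u \<le> v" "v \<le> b" "v - u < d" and "y u = 0 \<or> y v = 0"
    show "\<forall>t\<in>{u..v}. y t = 0"
      by (rule linear_ode_zero_on_short_interval[where A = A and w = w])
        (use uv d[OF uv] \<open>y u = 0 \<or> y v = 0\<close> norm_matrix_vector_mult_le in \<open>auto simp: w_def intro: incr
          continuous_on_subset[OF y] integrable_on_subinterval[OF Ay] integrable_on_subinterval[OF w]\<close>)
  qed
qed

lemma abs_diff_le_of_local_bound:
  fixes D C :: "real \<Rightarrow> real"
  assumes "a \<le> b" "d > 0"
    and local: "\<And>u v. a \<le> u \<Longrightarrow> u \<le> v \<Longrightarrow> v \<le> b \<Longrightarrow> v - u < d \<Longrightarrow>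
      \<bar>D v - D u\<bar> \<le> e * (C v - C u)"
  shows "\<bar>D b - D a\<bar> \<le> e * (C b - C a)"
proof -
  obtain n :: nat where n: "(b - a) / d < real n" using reals_Archimedean2 by blast
  then have "n > 0" using assms(1,2) by (smt (verit) divide_nonneg_pos of_nat_0_less_iff)
  define \<tau> where "\<tau> i = a + real i * (b - a) / real n" for i
  have \<tau>_ends: "\<tau> 0 = a" "\<tau> n = b" unfolding \<tau>_def using \<open>n > 0\<close> by auto
  have \<tau>_step: "\<tau> (Suc i) - \<tau> i = (b - a) / real n" for i
    unfolding \<tau>_def by (simp add: diff_divide_distrib[symmetric] algebra_simps)
  have \<tau>_in: "a \<le> \<tau> i" "\<tau> i \<le> b" if "i \<le> n" for i
    unfolding \<tau>_def using that \<open>a \<le> b\<close> \<open>n > 0\<close> mult_right_mono[of "real i" "real n" "b - a"]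
      mult_right_mono[of a b "real i"]
    by (auto simp: field_simps)
  have mesh: "0 \<le> (b - a) / real n" "(b - a) / real n < d"
    using n assms(1,2) \<open>n > 0\<close> by (simp_all add: field_simps)
  have step: "\<bar>D (\<tau> (Suc i)) - D (\<tau> i)\<bar> \<le> e * (C (\<tau> (Suc i)) - C (\<tau> i))" if "i < n" for i
    using local[of "\<tau> i" "\<tau> (Suc i)"] \<tau>_in[of i] \<tau>_in[of "Suc i"] \<tau>_step[of i] that mesh
    by auto
  have "\<bar>D b - D a\<bar> = \<bar>\<Sum>i<n. D (\<tau> (Suc i)) - D (\<tau> i)\<bar>"
    using sum_lessThan_telescope[of "\<lambda>i. D (\<tau> i)" n] by (simp add: \<tau>_ends)
  also have "\<dots> \<le> (\<Sum>i<n. e * (C (\<tau> (Suc i)) - C (\<tau> i)))"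
    by (rule order_trans[OF sum_abs sum_mono]) (simp add: step)
  also have "\<dots> = e * (C b - C a)"
    using sum_lessThan_telescope[of "\<lambda>i. C (\<tau> i)" n] by (simp add: sum_distrib_left[symmetric] \<tau>_ends)
  finally show ?thesis .
qed

lemma eq_if_increments_dominated:
  fixes D C :: "real \<Rightarrow> real"
  assumes "a \<le> b"
    and dom: "\<And>e. e > 0 \<Longrightarrow> \<exists>d>0. \<forall>u v. a \<le> u \<longrightarrow> u \<le> v \<longrightarrow> v \<le> b \<longrightarrow> v - u < d \<longrightarrow>
      \<bar>D v - D u\<bar> \<le> e * (C v - C u)"
  shows "D b = D a"
proof (rule ccontr)
  assume "D b \<noteq> D a"
  define k where "k = \<bar>C b - C a\<bar> + 1"
  have "k > 0" unfolding k_def by (smt (verit) abs_ge_zero)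
  define e where "e = \<bar>D b - D a\<bar> / (2 * k)"
  have "e > 0" using \<open>D b \<noteq> D a\<close> \<open>k > 0\<close> unfolding e_def by simp
  then obtain d where "d > 0" and "\<forall>u v. a \<le> u \<longrightarrow> u \<le> v \<longrightarrow> v \<le> b \<longrightarrow> v - u < d \<longrightarrow>
      \<bar>D v - D u\<bar> \<le> e * (C v - C u)"
    using dom by blast
  then have "\<bar>D b - D a\<bar> \<le> e * (C b - C a)"
    using abs_diff_le_of_local_bound[OF \<open>a \<le> b\<close> \<open>d > 0\<close>] by blast
  also have "\<dots> \<le> e * k" unfolding k_def using \<open>e > 0\<close> by (intro mult_left_mono) auto
  also have "\<dots> = \<bar>D b - D a\<bar> / 2" using \<open>k > 0\<close> unfolding e_def by simp
  finally show False using \<open>D b \<noteq> D a\<close> by simp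
qed

lemma inner_increment_eq_integral:
  fixes p q f g :: "real \<Rightarrow> 'a::euclidean_space"
  assumes f: "f integrable_on {u..v}" and g: "g integrable_on {u..v}"
    and incr: "p u - p v = integral {u..v} f" "q v - q u = integral {u..v} g"
  shows "(\<lambda>s. p v \<bullet> g s - f s \<bullet> q u) integrable_on {u..v}"
    and "p v \<bullet> q v - p u \<bullet> q u = integral {u..v} (\<lambda>s. p v \<bullet> g s - f s \<bullet> q u)"
proof -
  have gi: "(\<lambda>s. p v \<bullet> g s) integrable_on {u..v}"
    using integrable_linear[OF g bounded_linear_inner_right] by (simp add: o_def)
  have fi: "(\<lambda>s. f s \<bullet> q u) integrable_on {u..v}"
    using integrable_linear[OF f bounded_linear_inner_left] by (simp add: o_def)
  show "(\<lambda>s. p v \<bullet> g s - f s \<bullet> q u) integrable_on {u..v}"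
    by (rule integrable_diff[OF gi fi])
  have "p v \<bullet> q v - p u \<bullet> q u = p v \<bullet> (q v - q u) - (p u - p v) \<bullet> q u"
    by (simp add: inner_diff_left inner_diff_right)
  also have "\<dots> = p v \<bullet> integral {u..v} g - integral {u..v} f \<bullet> q u"
    by (simp only: incr)
  also have "\<dots> = integral {u..v} (\<lambda>s. p v \<bullet> g s - f s \<bullet> q u)"
    using integral_linear[OF g bounded_linear_inner_right, of "p v"]
      integral_linear[OF f bounded_linear_inner_left, of "q u"]
    by (simp add: integral_diff[OF gi fi] o_def)
  finally show "p v \<bullet> q v - p u \<bullet> q u = integral {u..v} (\<lambda>s. p v \<bullet> g s - f s \<bullet> q u)" .
qed

lemma abs_inner_cross_le:
  fixes p q p' q' f g :: "'a::real_inner"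
  assumes "f \<bullet> q' = p' \<bullet> g" "norm (p - p') \<le> e" "norm (q - q') \<le> e"
  shows "\<bar>p \<bullet> g - f \<bullet> q\<bar> \<le> e * (norm f + norm g)"
proof -
  have "p \<bullet> g - f \<bullet> q = (p - p') \<bullet> g - f \<bullet> (q - q')"
    using assms(1) by (simp add: inner_diff_left inner_diff_right)
  moreover have "\<bar>(p - p') \<bullet> g\<bar> \<le> e * norm g" "\<bar>f \<bullet> (q - q')\<bar> \<le> norm f * e"
    using order_trans[OF Cauchy_Schwarz_ineq2 mult_right_mono[OF assms(2) norm_ge_zero]]
      order_trans[OF Cauchy_Schwarz_ineq2 mult_left_mono[OF assms(3) norm_ge_zero]] by auto
  ultimately show ?thesis by (simp add: distrib_left mult.commute abs_le_iff)
qed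

lemma inner_increment_dominated:
  fixes p q f g :: "real \<Rightarrow> 'a::euclidean_space"
  assumes p: "continuous_on {a..b} p" and q: "continuous_on {a..b} q"
    and f: "f absolutely_integrable_on {a..b}" and g: "g absolutely_integrable_on {a..b}"
    and p_incr: "\<And>u v. a \<le> u \<Longrightarrow> u \<le> v \<Longrightarrow> v \<le> b \<Longrightarrow> p u - p v = integral {u..v} f"
    and q_incr: "\<And>u v. a \<le> u \<Longrightarrow> u \<le> v \<Longrightarrow> v \<le> b \<Longrightarrow> q v - q u = integral {u..v} g"
    and balance: "\<And>s. s \<in> {a..b} \<Longrightarrow> f s \<bullet> q s = p s \<bullet> g s"
    and "e > 0"
  shows "\<exists>d>0. \<forall>u v. a \<le> u \<longrightarrow> u \<le> v \<longrightarrow> v \<le> b \<longrightarrow> v - u < d \<longrightarrow>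
    \<bar>p v \<bullet> q v - p u \<bullet> q u\<bar> \<le> e * integral {u..v} (\<lambda>s. norm (f s) + norm (g s))"
proof -
  obtain d1 where "d1 > 0" and d1: "\<And>x x'. x \<in> {a..b} \<Longrightarrow> x' \<in> {a..b} \<Longrightarrow> dist x' x < d1 \<Longrightarrow>
      dist (p x') (p x) < e"
    using compact_uniformly_continuous[OF p] \<open>e > 0\<close> unfolding uniformly_continuous_on_def by auto
  obtain d2 where "d2 > 0" and d2: "\<And>x x'. x \<in> {a..b} \<Longrightarrow> x' \<in> {a..b} \<Longrightarrow> dist x' x < d2 \<Longrightarrow>
      dist (q x') (q x) < e"
    using compact_uniformly_continuous[OF q] \<open>e > 0\<close> unfolding uniformly_continuous_on_def by auto
  have "f integrable_on {a..b}" "g integrable_on {a..b}"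
    "(\<lambda>s. norm (f s) + norm (g s)) integrable_on {a..b}"
    by (intro integrable_add set_lebesgue_integral_eq_integral(1) f g
        absolutely_integrable_norm[OF f, unfolded o_def] absolutely_integrable_norm[OF g, unfolded o_def])+
  then have fg: "f integrable_on {u..v}" "g integrable_on {u..v}"
    "(\<lambda>s. norm (f s) + norm (g s)) integrable_on {u..v}" if "a \<le> u" "v \<le> b" for u v
    using that by (auto intro: integrable_on_subinterval)
  show ?thesis
  proof (intro exI[of _ "min d1 d2"] conjI allI impI)
    show "min d1 d2 > 0" using \<open>d1 > 0\<close> \<open>d2 > 0\<close> by simp
    fix u v assume uv: "a \<le> u" "u \<le> v" "v \<le> b" "v - u < min d1 d2"
    note increment = inner_increment_eq_integral[OF fg(1,2)[OF uv(1,3)] p_incr[OF uv(1-3)] q_incr[OF uv(1-3)]]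
    have "\<bar>p v \<bullet> q v - p u \<bullet> q u\<bar> \<le> integral {u..v} (\<lambda>s. e * (norm (f s) + norm (g s)))"
      unfolding increment(2) real_norm_def[symmetric]
    proof (rule integral_norm_bound_integral[OF increment(1) integrable_on_mult_right[OF fg(3)[OF uv(1,3)]]])
      fix s assume s: "s \<in> {u..v}"
      have "norm (p v - p s) \<le> e" "norm (q u - q s) \<le> e"
        using d1[of s v] d2[of s u] s uv by (auto simp: dist_norm dist_real_def)
      then show "norm (p v \<bullet> g s - f s \<bullet> q u) \<le> e * (norm (f s) + norm (g s))"
        using abs_inner_cross_le[OF balance] s uv by simp
    qed
    then show "\<bar>p v \<bullet> q v - p u \<bullet> q u\<bar> \<le> e * integral {u..v} (\<lambda>s. norm (f s) + norm (g s))"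
      by (simp add: integral_mult_right)
  qed
qed

(* The balance condition says that the derivative - f . q + p . g of p . q vanishes. *)
lemma inner_const_of_adjoint_pair:
  fixes p q f g :: "real \<Rightarrow> 'a::euclidean_space"
  assumes p: "continuous_on {a..b} p" and q: "continuous_on {a..b} q"
    and f: "f absolutely_integrable_on {a..b}" and g: "g absolutely_integrable_on {a..b}"
    and p_incr: "\<And>u v. a \<le> u \<Longrightarrow> u \<le> v \<Longrightarrow> v \<le> b \<Longrightarrow> p u - p v = integral {u..v} f"
    and q_incr: "\<And>u v. a \<le> u \<Longrightarrow> u \<le> v \<Longrightarrow> v \<le> b \<Longrightarrow> q v - q u = integral {u..v} g"
    and balance: "\<And>s. s \<in> {a..b} \<Longrightarrow> f s \<bullet> q s = p s \<bullet> g s"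
    and t: "t \<in> {a..b}"
  shows "p t \<bullet> q t = p b \<bullet> q b"
proof -
  define c where "c s = norm (f s) + norm (g s)" for s
  have c: "c integrable_on {a..b}"
    unfolding c_def by (intro integrable_add set_lebesgue_integral_eq_integral(1)
        absolutely_integrable_norm[OF f, unfolded o_def] absolutely_integrable_norm[OF g, unfolded o_def])
  have "p b \<bullet> q b = p t \<bullet> q t"
  proof (rule eq_if_increments_dominated[where D = "\<lambda>x. p x \<bullet> q x" and C = "\<lambda>x. integral {a..x} c"])
    fix e :: real assume "e > 0"
    then obtain d where "d > 0" and d: "\<And>u v. a \<le> u \<Longrightarrow> u \<le> v \<Longrightarrow> v \<le> b \<Longrightarrow> v - u < d \<Longrightarrow>
        \<bar>p v \<bullet> q v - p u \<bullet> q u\<bar> \<le> e * integral {u..v} c"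
      using inner_increment_dominated[OF assms(1-7)] unfolding c_def by blast
    have split: "integral {u..v} c = integral {a..v} c - integral {a..u} c"
      if "a \<le> u" "u \<le> v" "v \<le> b" for u v
      using Henstock_Kurzweil_Integration.integral_combine[OF that(1,2)
          integrable_on_subinterval[OF c, of a v]] that by auto
    show "\<exists>d>0. \<forall>u v. t \<le> u \<longrightarrow> u \<le> v \<longrightarrow> v \<le> b \<longrightarrow> v - u < d \<longrightarrow>
        \<bar>p v \<bullet> q v - p u \<bullet> q u\<bar> \<le> e * (integral {a..v} c - integral {a..u} c)"
    proof (intro exI[of _ d] conjI allI impI \<open>d > 0\<close>)
      fix u v assume "t \<le> u" "u \<le> v" "v \<le> b" "v - u < d"
      moreover have "a \<le> u" using t \<open>t \<le> u\<close> by simp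
      ultimately show "\<bar>p v \<bullet> q v - p u \<bullet> q u\<bar> \<le> e * (integral {a..v} c - integral {a..u} c)"
        using d[of u v] split[of u v] by simp
    qed
  qed (use t in simp)
  then show ?thesis by simp
qed

lemma fundamental_matrix_increment:
  fixes A Phi :: "real \<Rightarrow> real^'n^'n"
  assumes F: "is_fundamental_matrix A Phi" and A: "A absolutely_integrable_on {0..1}"
    and "0 \<le> u" "u \<le> v" "v \<le> 1"
  shows "Phi v *v x - Phi u *v x = integral {u..v} (\<lambda>s. A s *v (Phi s *v x))"
proof -
  have Phi: "continuous_on {0..1} Phi" using F unfolding is_fundamental_matrix_def by blast
  have AP: "(\<lambda>s. A s ** Phi s) absolutely_integrable_on {0..1}"
    by (rule absolutely_integrable_bilinear_continuous[OF
          bilinear_swap[OF bilinear_matrix_matrix_mult] Phi _ A]) simp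
  have "Phi v - Phi u = integral {u..v} (\<lambda>s. A s ** Phi s)"
    using F assms(3-5) unfolding is_fundamental_matrix_def
    by (intro increment_of_integral_from_left[OF AP]) auto
  then have "Phi v *v x - Phi u *v x = integral {u..v} (\<lambda>s. A s ** Phi s) *v x"
    by (simp add: matrix_vector_mult_diff_rdistrib[symmetric])
  also have "\<dots> = integral {u..v} (\<lambda>s. A s *v (Phi s *v x))"
    using integral_linear[OF _ bilinear_matrix_vector_mult[unfolded bilinear_conv_bounded_bilinear,
          THEN bounded_bilinear.bounded_linear_left], of "\<lambda>s. A s ** Phi s" "{u..v}" x]
      integrable_on_subinterval[OF set_lebesgue_integral_eq_integral(1)[OF AP], of u v] assms(3-5)
    by (simp add: o_def matrix_vector_mul_assoc)
  finally show ?thesis .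
qed

lemma fundamental_matrix_at_0:
  assumes "is_fundamental_matrix A Phi"
  shows "Phi 0 = mat 1"
  using assms set_integral_null_set[of "{0}" lebesgue] unfolding is_fundamental_matrix_def by simp

lemma fundamental_matrix_invertible:
  fixes A Phi :: "real \<Rightarrow> real^'n^'n"
  assumes F: "is_fundamental_matrix A Phi" and A: "A absolutely_integrable_on {0..1}"
    and "t \<in> {0..1}"
  shows "invertible (Phi t)"
proof -
  have "x = 0" if "Phi t *v x = 0" for x
  proof -
    have "continuous_on {0..1} (\<lambda>s. Phi s *v x)"
      using F unfolding is_fundamental_matrix_def by (auto intro!: continuous_intros)
    then have "\<forall>s\<in>{0..1}. Phi s *v x = 0"
      by (rule linear_ode_unique[OF A _ fundamental_matrix_increment[OF F A] \<open>t \<in> {0..1}\<close> that])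
    then show "x = 0" using fundamental_matrix_at_0[OF F] by force
  qed
  then obtain B where "B ** Phi t = mat 1" using matrix_left_invertible_ker by blast
  then show ?thesis unfolding invertible_def using matrix_left_right_inverse by blast
qed

lemma adjoint_solution_increment:
  fixes A :: "real \<Rightarrow> real^'n^'n"
  assumes T: "is_adjoint_solution A g th" and A: "A absolutely_integrable_on {0..1}"
  shows "(\<lambda>s. transpose (A s) *v th s) absolutely_integrable_on {0..1}"
    and "\<And>u v. 0 \<le> u \<Longrightarrow> u \<le> v \<Longrightarrow> v \<le> 1 \<Longrightarrow>
      th u - th v = integral {u..v} (\<lambda>s. transpose (A s) *v th s)"
proof -
  have "(\<lambda>s. transpose (A s)) absolutely_integrable_on {0..1}"
    using A by (simp add: absolutely_integrable_on_cart_iff transpose_def)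
  then show AT: "(\<lambda>s. transpose (A s) *v th s) absolutely_integrable_on {0..1}"
    using T unfolding is_adjoint_solution_def
    by (intro absolutely_integrable_bilinear_continuous[OF
          bilinear_swap[OF bilinear_matrix_vector_mult]]) auto
  show "th u - th v = integral {u..v} (\<lambda>s. transpose (A s) *v th s)"
    if "0 \<le> u" "u \<le> v" "v \<le> 1" for u v
    using T that unfolding is_adjoint_solution_def
    by (intro increment_of_integral_to_right[OF AT]) auto
qed

lemma adjoint_inner_fundamental:
  fixes A Phi :: "real \<Rightarrow> real^'n^'n"
  assumes F: "is_fundamental_matrix A Phi" and A: "A absolutely_integrable_on {0..1}"
    and T: "is_adjoint_solution A g th" and "t \<in> {0..1}"
  shows "th t \<bullet> (Phi t *v x) = g \<bullet> (Phi 1 *v x)"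
proof -
  have y: "continuous_on {0..1} (\<lambda>s. Phi s *v x)"
    using F unfolding is_fundamental_matrix_def by (auto intro!: continuous_intros)
  have "th t \<bullet> (Phi t *v x) = th 1 \<bullet> (Phi 1 *v x)"
  proof (rule inner_const_of_adjoint_pair[OF _ y adjoint_solution_increment(1)[OF T A] _
        adjoint_solution_increment(2)[OF T A] fundamental_matrix_increment[OF F A] _ \<open>t \<in> {0..1}\<close>])
    show "continuous_on {0..1} th" using T unfolding is_adjoint_solution_def by blast
    show "(\<lambda>s. A s *v (Phi s *v x)) absolutely_integrable_on {0..1}"
      by (rule absolutely_integrable_bilinear_continuous[OF
            bilinear_swap[OF bilinear_matrix_vector_mult] y _ A]) simp
  qed (metis dot_lmul_matrix transpose_matrix_vector)+
  moreover have "th 1 = g"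
    using T set_integral_null_set[of "{1}" lebesgue] unfolding is_adjoint_solution_def by simp
  ultimately show ?thesis by simp
qed

lemma adjoint_inner_transport:
  fixes A Phi :: "real \<Rightarrow> real^'n^'n"
  assumes F: "is_fundamental_matrix A Phi" and A: "A absolutely_integrable_on {0..1}"
    and T: "is_adjoint_solution A g th" and t: "t \<in> {0..1}"
  shows "th t \<bullet> w = g \<bullet> (Phi 1 *v (matrix_inv (Phi t) *v w))"
proof -
  have "Phi t *v (matrix_inv (Phi t) *v w) = w"
    using matrix_inv_invertible(1)[OF fundamental_matrix_invertible[OF F A t]]
    by (simp add: matrix_vector_mul_assoc)
  then show ?thesis using adjoint_inner_fundamental[OF F A T t, of "matrix_inv (Phi t) *v w"] by simp
qed

lemma absolutely_integrable_inverse_fundamental_mult: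
  fixes A Phi :: "real \<Rightarrow> real^'n^'n" and B :: "real \<Rightarrow> real^'m^'n"
  assumes F: "is_fundamental_matrix A Phi" and A: "A absolutely_integrable_on {0..1}"
    and Bw: "(\<lambda>s. B s *v w s) absolutely_integrable_on {0..1}"
  shows "(\<lambda>s. (matrix_inv (Phi s) ** B s) *v w s) absolutely_integrable_on {0..1}"
proof -
  have "continuous_on {0..1} (\<lambda>s. matrix_inv (Phi s))"
    using F fundamental_matrix_invertible[OF F A] unfolding is_fundamental_matrix_def
    by (intro continuous_on_matrix_inv) auto
  from absolutely_integrable_bilinear_continuous[OF bilinear_matrix_vector_mult this _ Bw]
  show ?thesis by (simp add: matrix_vector_mul_assoc)
qed

section \<open>Partitions of the unit interval\<close>

lemma partition_less:
  fixes ts :: "nat \<Rightarrow> real"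
  assumes "\<And>i. i < N \<Longrightarrow> ts i < ts (Suc i)" "i < j" "j \<le> N"
  shows "ts i < ts j"
  by (rule lift_Suc_mono_less_ivl[of "{..<N}"]) (use assms in auto)

lemma partition_le:
  fixes ts :: "nat \<Rightarrow> real"
  assumes "\<And>i. i < N \<Longrightarrow> ts i < ts (Suc i)" "i \<le> j" "j \<le> N"
  shows "ts i \<le> ts j"
  using partition_less[where N = N and ts = ts, OF assms(1), of i j] assms(2,3) by (cases "i = j") auto

lemma partition_cells_disjoint:
  fixes ts :: "nat \<Rightarrow> real"
  assumes "\<And>i. i < N \<Longrightarrow> ts i < ts (Suc i)" "k \<in> {1..N}" "k' \<in> {1..N}" "k \<noteq> k'"
  shows "{ts (k - 1)..<ts k} \<inter> {ts (k' - 1)..<ts k'} = {}"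
proof -
  consider "k < k'" | "k' < k" using assms(4) by linarith
  then show ?thesis
  proof cases
    case 1
    then have "ts k \<le> ts (k' - 1)"
      using partition_le[where N = N and ts = ts, OF assms(1), of k "k' - 1"] assms(3) by simp
    then show ?thesis by auto
  next
    case 2
    then have "ts k' \<le> ts (k - 1)"
      using partition_le[where N = N and ts = ts, OF assms(1), of k' "k - 1"] assms(2) by simp
    then show ?thesis by auto
  qed
qed

lemma partition_cell_exists:
  fixes ts :: "nat \<Rightarrow> real"
  assumes "\<And>i. i < N \<Longrightarrow> ts i < ts (Suc i)" "t \<in> {ts 0..ts N}" "t \<notin> ts ` {0..N}"
  shows "\<exists>k\<in>{1..N}. ts (k - 1) < t \<and> t < ts k"
proof -
  have "t \<noteq> ts N" using assms(3) by auto
  then have "t < ts N" using assms(2) by simp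
  define k where "k = (LEAST k. t < ts k)"
  have "t < ts k" unfolding k_def by (rule LeastI[of _ N]) fact
  moreover have "k \<le> N" unfolding k_def by (rule Least_le) fact
  moreover have "k \<noteq> 0" using \<open>t < ts k\<close> assms(2) by (cases k) auto
  moreover have "ts (k - 1) \<le> t"
    using not_less_Least[of "k - 1" "\<lambda>k. t < ts k"] \<open>k \<noteq> 0\<close> unfolding k_def by simp
  moreover have "ts (k - 1) \<noteq> t" using assms(3) \<open>k \<le> N\<close> by auto
  ultimately show ?thesis by (intro bexI[of _ k]) auto
qed

lemma sum_indicator_partition_cells:
  fixes ts :: "nat \<Rightarrow> real" and \<theta> :: "nat \<Rightarrow> 'a::real_vector"
  assumes "\<And>i. i < N \<Longrightarrow> ts i < ts (Suc i)" "k \<in> {1..N}" "t \<in> {ts (k - 1)..<ts k}"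
  shows "(\<Sum>k'\<in>{1..N}. indicator {ts (k' - 1)..<ts k'} t *\<^sub>R \<theta> k') = \<theta> k"
proof -
  have "t \<notin> {ts (k' - 1)..<ts k'}" if "k' \<in> {1..N} - {k}" for k'
    using partition_cells_disjoint[where N = N and ts = ts, OF assms(1,2), of k'] that assms(3) by blast
  then have "(\<Sum>k'\<in>{1..N}. indicator {ts (k' - 1)..<ts k'} t *\<^sub>R \<theta> k') =
      (\<Sum>k'\<in>{k}. indicator {ts (k' - 1)..<ts k'} t *\<^sub>R \<theta> k')"
    using assms(2) by (intro sum.mono_neutral_right) auto
  also have "\<dots> = \<theta> k" using assms(3) by simp
  finally show ?thesis .
qed

section \<open>Needle variations\<close>

lemma small_nonnull_subset:
  fixes S :: "real set"
  assumes "S \<in> sets lebesgue" "S \<notin> null_sets lebesgue" "\<eta> > 0"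
  obtains T where "T \<in> lmeasurable" "T \<subseteq> S" "0 < measure lebesgue T" "measure lebesgue T \<le> \<eta>"
proof -
  define I where "I q = {real_of_int q * \<eta> .. (real_of_int q + 1) * \<eta>}" for q :: int
  have "S \<subseteq> (\<Union>q. S \<inter> I q)"
  proof
    fix s assume "s \<in> S"
    have "s \<in> I \<lfloor>s / \<eta>\<rfloor>"
      unfolding I_def using floor_divide_lower[OF \<open>\<eta> > 0\<close>, of s] floor_divide_upper[OF \<open>\<eta> > 0\<close>, of s]
      by simp
    then show "s \<in> (\<Union>q. S \<inter> I q)" using \<open>s \<in> S\<close> by blast
  qed
  then obtain q where q: "S \<inter> I q \<notin> null_sets lebesgue"
    using assms null_sets_subset[of "\<Union>q. S \<inter> I q" lebesgue S] null_sets_UN[of "\<lambda>q. S \<inter> I q"]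
    by auto
  have I: "I q \<in> lmeasurable" "measure lebesgue (I q) = \<eta>"
    unfolding I_def using \<open>\<eta> > 0\<close> by (simp_all add: measure_completion algebra_simps)
  have T: "S \<inter> I q \<in> lmeasurable"
    using fmeasurable_Int_fmeasurable[OF I(1) assms(1)] by (simp add: Int_commute)
  show ?thesis
  proof (rule that[OF T])
    show "measure lebesgue (S \<inter> I q) \<le> \<eta>"
      using measure_mono_fmeasurable[OF _ fmeasurableD[OF T] I(1)] I(2) by simp
    have "measure lebesgue (S \<inter> I q) \<noteq> 0"
      using q T negligible_iff_measure negligible_iff_null_sets by blast
    then show "0 < measure lebesgue (S \<inter> I q)" using measure_nonneg[of lebesgue] by (simp add: less_le)
  qed simp
qed

lemma has_derivative_increase_on_cone:
  fixes h :: "'a::real_inner \<Rightarrow> real"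
  assumes "(h has_derivative (\<lambda>w. g \<bullet> w)) (at z)" "\<alpha> > 0" "\<beta> \<ge> 0"
  obtains \<eta> where "\<eta> > 0"
    "\<And>\<delta> m. 0 < m \<Longrightarrow> m \<le> \<eta> \<Longrightarrow> \<alpha> * m \<le> g \<bullet> \<delta> \<Longrightarrow> norm \<delta> \<le> \<beta> * m \<Longrightarrow> h z < h (z + \<delta>)"
proof -
  define e where "e = \<alpha> / (2 * (\<beta> + 1))"
  have "e > 0" unfolding e_def using assms(2,3) by simp
  then obtain d where "d > 0" and d: "\<And>y. norm (y - z) < d \<Longrightarrow>
      norm (h y - h z - g \<bullet> (y - z)) \<le> e * norm (y - z)"
    using assms(1)[unfolded has_derivative_at_alt] by blast
  show ?thesis
  proof (rule that[of "d / (\<beta> + 1)"])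
    show "d / (\<beta> + 1) > 0" using \<open>d > 0\<close> assms(3) by simp
    fix \<delta> m assume m: "0 < m" "m \<le> d / (\<beta> + 1)" and \<delta>: "\<alpha> * m \<le> g \<bullet> \<delta>" "norm \<delta> \<le> \<beta> * m"
    have "\<beta> * m < (\<beta> + 1) * m" using m by simp
    also have "\<dots> \<le> d" using m assms(3) by (simp add: field_simps)
    finally have "norm \<delta> < d" using \<delta>(2) by simp
    then have "g \<bullet> \<delta> - e * norm \<delta> \<le> h (z + \<delta>) - h z" using d[of "z + \<delta>"] by simp
    moreover have "e * norm \<delta> \<le> \<alpha> * m / 2"
    proof -
      have "e * norm \<delta> \<le> e * (\<beta> * m)" using \<delta>(2) \<open>e > 0\<close> by simp
      also have "\<dots> \<le> e * ((\<beta> + 1) * m)" using \<open>e > 0\<close> m by (intro mult_left_mono) auto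
      also have "\<dots> = \<alpha> * m / 2" unfolding e_def using assms(3) by (simp add: field_simps)
      finally show ?thesis .
    qed
    moreover have "0 < \<alpha> * m" using assms(2) m by simp
    ultimately show "h z < h (z + \<delta>)" using \<delta>(1) by linarith
  qed
qed

lemma gradient_has_derivative:
  fixes h :: "'a::euclidean_space \<Rightarrow> real"
  assumes "h differentiable (at z)"
  shows "(h has_derivative (\<lambda>v. gradient h z \<bullet> v)) (at z)"
proof -
  obtain D where D: "(h has_derivative D) (at z)" using assms unfolding differentiable_def by blast
  define g where "g = adjoint D 1"
  have "D = (\<lambda>v. g \<bullet> v)"
    using adjoint_works[OF has_derivative_linear[OF D], of _ 1] unfolding g_def
    by (auto simp: inner_commute)
  with D have g: "(h has_derivative (\<lambda>v. g \<bullet> v)) (at z)" by simp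
  have "gradient h z = g"
    unfolding gradient_def
  proof (rule the_equality)
    show "(h has_derivative (\<lambda>v. g \<bullet> v)) (at z)" by (rule g)
    fix g' assume "(h has_derivative (\<lambda>v. g' \<bullet> v)) (at z)"
    then have "(\<lambda>v. g' \<bullet> v) = (\<lambda>v. g \<bullet> v)" using has_derivative_unique g by blast
    then have "(g' - g) \<bullet> (g' - g) = 0" by (metis inner_diff_left right_minus_eq)
    then show "g' = g" by simp
  qed
  then show ?thesis using g by simp
qed

lemma nonnull_positive_part_bounded_below:
  fixes H :: "real \<Rightarrow> 'a::euclidean_space"
  assumes J: "J \<in> sets lebesgue" and H: "set_borel_measurable lebesgue J H"
    and nonnull: "{s \<in> J. 0 < g \<bullet> H s} \<notin> null_sets lebesgue"
  obtains j :: nat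
  where "{s \<in> J. 1 / real (Suc j) \<le> g \<bullet> H s \<and> norm (H s) \<le> real j} \<in> sets lebesgue"
    "{s \<in> J. 1 / real (Suc j) \<le> g \<bullet> H s \<and> norm (H s) \<le> real j} \<notin> null_sets lebesgue"
proof -
  define E where "E j = {s \<in> J. 1 / real (Suc j) \<le> g \<bullet> H s \<and> norm (H s) \<le> real j}" for j
  define HJ where "HJ s = indicator J s *\<^sub>R H s" for s
  have "HJ \<in> borel_measurable lebesgue" using H unfolding set_borel_measurable_def HJ_def .
  then have preimage: "{s. HJ s \<in> C} \<in> sets lebesgue" if "closed C" for C
    using measurable_sets[of HJ lebesgue borel C] borel_closed[OF that] by (simp add: vimage_def)
  have E_sets: "E j \<in> sets lebesgue" for j
  proof -
    have "E j = J \<inter> {s. HJ s \<in> {a. 1 / real (Suc j) \<le> g \<bullet> a \<and> norm a \<le> real j}}"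
      unfolding E_def HJ_def by auto
    also have "\<dots> \<in> sets lebesgue"
      using J by (intro sets.Int preimage closed_Collect_conj closed_Collect_le continuous_intros) auto
    finally show ?thesis .
  qed
  have "{s \<in> J. 0 < g \<bullet> H s} \<subseteq> (\<Union>j. E j)"
  proof
    fix s assume s: "s \<in> {s \<in> J. 0 < g \<bullet> H s}"
    then obtain n :: nat where "0 < n" "inverse (real n) < g \<bullet> H s"
      using ex_inverse_of_nat_less by auto
    moreover obtain m :: nat where "norm (H s) \<le> real m" using real_arch_simple by blast
    moreover have "real n * (g \<bullet> H s) \<le> real (Suc (max n m)) * (g \<bullet> H s)"
      using s by (intro mult_right_mono) auto
    ultimately have "s \<in> E (max n m)"
      using s unfolding E_def by (auto simp: field_simps le_max_iff_disj)
    then show "s \<in> (\<Union>j. E j)" by blast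
  qed
  moreover have "(\<Union>j. E j) \<in> null_sets lebesgue" if "\<And>j. E j \<in> null_sets lebesgue"
    using that by (rule null_sets_UN)
  ultimately obtain j where "E j \<notin> null_sets lebesgue"
    using nonnull null_sets_completion_subset[of "{s \<in> J. 0 < g \<bullet> H s}" "\<Union>j. E j" lborel] by auto
  then show ?thesis using that E_sets unfolding E_def by blast
qed

lemma needle_variation_null:
  fixes H :: "real \<Rightarrow> 'a::euclidean_space" and h :: "'a \<Rightarrow> real"
  assumes h: "(h has_derivative (\<lambda>w. g \<bullet> w)) (at z)"
    and J: "J \<in> sets lebesgue" and H: "set_integrable lebesgue J H"
    and max: "\<And>S. S \<in> sets lebesgue \<Longrightarrow> S \<subseteq> J \<Longrightarrow> h (z + (LINT s:S|lebesgue. H s)) \<le> h z"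
  shows "{s \<in> J. 0 < g \<bullet> H s} \<in> null_sets lebesgue"
proof (rule ccontr)
  assume "{s \<in> J. 0 < g \<bullet> H s} \<notin> null_sets lebesgue"
  moreover have "set_borel_measurable lebesgue J H"
    using H unfolding set_integrable_def set_borel_measurable_def by (rule borel_measurable_integrable)
  ultimately obtain j where E: "{s \<in> J. 1 / real (Suc j) \<le> g \<bullet> H s \<and> norm (H s) \<le> real j} \<in> sets lebesgue"
      "{s \<in> J. 1 / real (Suc j) \<le> g \<bullet> H s \<and> norm (H s) \<le> real j} \<notin> null_sets lebesgue"
    using nonnull_positive_part_bounded_below[OF J] by blast
  obtain \<eta> where "\<eta> > 0" and \<eta>: "\<And>\<delta> m. 0 < m \<Longrightarrow> m \<le> \<eta> \<Longrightarrow> 1 / real (Suc j) * m \<le> g \<bullet> \<delta> \<Longrightarrow>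
      norm \<delta> \<le> real j * m \<Longrightarrow> h z < h (z + \<delta>)"
    using has_derivative_increase_on_cone[OF h, of "1 / real (Suc j)" "real j"] by auto
  obtain T where T: "T \<in> lmeasurable" "T \<subseteq> {s \<in> J. 1 / real (Suc j) \<le> g \<bullet> H s \<and> norm (H s) \<le> real j}"
      "0 < measure lebesgue T" "measure lebesgue T \<le> \<eta>"
    using small_nonnull_subset[OF E \<open>\<eta> > 0\<close>] by blast
  then have "T \<subseteq> J" by auto
  have HT: "set_integrable lebesgue T H"
    by (rule set_integrable_subset[OF H fmeasurableD[OF T(1)] \<open>T \<subseteq> J\<close>])
  have bounds: "1 / real (Suc j) \<le> g \<bullet> H s" "norm (H s) \<le> real j" if "s \<in> T" for s
    using that T(2) by auto
  have "h z < h (z + (LINT s:T|lebesgue. H s))"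
    using set_integral_bounds[OF T(1) HT bounds] \<eta> T(3,4) by blast
  then show False using max[OF fmeasurableD[OF T(1)] \<open>T \<subseteq> J\<close>] by simp
qed

section \<open>The maximum principle\<close>

lemma admissible_needle:
  assumes "admissible V u" "v \<in> V" "S \<in> sets lebesgue"
  shows "admissible V (\<lambda>t. if t \<in> S then v else u t)"
proof -
  have uV: "\<forall>t\<in>{0..1}. u t \<in> V" and um: "set_borel_measurable lebesgue {0..1} u"
    and u2: "set_integrable lebesgue {0..1::real} (\<lambda>t. (norm (u t))\<^sup>2)"
    using assms(1) unfolding admissible_def by auto
  have "(\<lambda>t. if t \<in> S then indicator {0..1::real} t *\<^sub>R v else indicator {0..1} t *\<^sub>R u t)
      \<in> borel_measurable lebesgue"
    using assms(3) by (intro measurable_If_set[OF borel_measurable_scaleR[OF borel_measurable_indicator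
          borel_measurable_const] um[unfolded set_borel_measurable_def]]) auto
  moreover have "(\<lambda>t. if t \<in> S then indicator {0..1::real} t *\<^sub>R v else indicator {0..1} t *\<^sub>R u t) =
      (\<lambda>t. indicator {0..1} t *\<^sub>R (if t \<in> S then v else u t))"
    by auto
  ultimately have m: "set_borel_measurable lebesgue {0..1} (\<lambda>t. if t \<in> S then v else u t)"
    unfolding set_borel_measurable_def by simp
  have "set_integrable lebesgue {0..1::real} (\<lambda>t. indicator S t * ((norm v)\<^sup>2 - (norm (u t))\<^sup>2))"
    using integrable_mult_indicator[OF assms(3) set_integral_diff(1)[OF
          absolutely_integrable_on_const[of "{0..1}" "(norm v)\<^sup>2"] u2, unfolded set_integrable_def]]
    unfolding set_integrable_def by (simp add: mult_ac)
  from set_integral_add(1)[OF u2 this]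
  have "set_integrable lebesgue {0..1::real} (\<lambda>t. (norm (if t \<in> S then v else u t))\<^sup>2)"
    by (rule back_subst[of "set_integrable lebesgue {0..1}"]) (auto simp: indicator_def)
  then show ?thesis unfolding admissible_def using uV assms(2) m by auto
qed

lemma zvec_cong:
  assumes "\<And>s. s \<in> {ts (i - 1)..<ts i} \<Longrightarrow> u s = u' s"
  shows "zvec Phi B ts u i = zvec Phi B ts u' i"
proof -
  have "(LINT s:{ts (i - 1)..<ts i}|lebesgue. (matrix_inv (Phi s) ** B s) *v u s) =
      (LINT s:{ts (i - 1)..<ts i}|lebesgue. (matrix_inv (Phi s) ** B s) *v u' s)"
    by (rule set_lebesgue_integral_cong) (use assms in auto)
  then show ?thesis unfolding zvec_def by simp
qed

lemma objective_eq_hfun: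
  assumes "k \<in> {1..N}" "\<And>i. i \<in> {1..N} - {k} \<Longrightarrow> zvec Phi B ts u i = zvec Phi B ts u0 i"
  shows "objective M N xi ts Phi B f x0 Q u = hfun M N xi ts Phi B f x0 Q u0 k (zvec Phi B ts u k)"
proof -
  have "x_end N xi ts Phi B f x0 u \<omega> = xhat0 Phi f x0 +
      (\<Sum>i\<in>{1..N} - {k}. xi i \<omega> *\<^sub>R zvec Phi B ts u0 i) + xi k \<omega> *\<^sub>R zvec Phi B ts u k" for \<omega>
  proof -
    have "(\<Sum>i\<in>{1..N}. xi i \<omega> *\<^sub>R zvec Phi B ts u i) =
        xi k \<omega> *\<^sub>R zvec Phi B ts u k + (\<Sum>i\<in>{1..N} - {k}. xi i \<omega> *\<^sub>R zvec Phi B ts u i)"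
      using assms(1) by (subst sum.remove) auto
    also have "(\<Sum>i\<in>{1..N} - {k}. xi i \<omega> *\<^sub>R zvec Phi B ts u i) =
        (\<Sum>i\<in>{1..N} - {k}. xi i \<omega> *\<^sub>R zvec Phi B ts u0 i)"
      using assms(2) by simp
    finally show ?thesis unfolding x_end_def by (simp add: algebra_simps)
  qed
  then show ?thesis unfolding objective_def hfun_def by simp
qed

lemma zvec_needle:
  fixes Phi :: "real \<Rightarrow> real^'n^'n" and B :: "real \<Rightarrow> real^'m^'n"
  defines "G \<equiv> \<lambda>w s. (matrix_inv (Phi s) ** B s) *v w"
  assumes S: "S \<in> sets lebesgue" "S \<subseteq> {ts (k - 1)..<ts k}"
    and int: "set_integrable lebesgue {ts (k - 1)..<ts k} (\<lambda>s. G (u0 s) s)"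
      "set_integrable lebesgue {ts (k - 1)..<ts k} (\<lambda>s. G (v - u0 s) s)"
  shows "zvec Phi B ts (\<lambda>t. if t \<in> S then v else u0 t) k =
    zvec Phi B ts u0 k + (LINT s:S|lebesgue. Phi 1 *v G (v - u0 s) s)"
proof -
  define K where "K = {ts (k - 1)..<ts k}"
  have "G (if s \<in> S then v else u0 s) s = G (u0 s) s + indicator S s *\<^sub>R G (v - u0 s) s" for s
    unfolding G_def by (simp add: matrix_vector_right_distrib[symmetric])
  moreover have "set_integrable lebesgue K (\<lambda>s. indicator S s *\<^sub>R G (v - u0 s) s)"
    using integrable_mult_indicator[OF S(1) int(2)[folded K_def, unfolded set_integrable_def]]
    unfolding set_integrable_def by (simp add: mult.commute)
  ultimately have "(LINT s:K|lebesgue. G (if s \<in> S then v else u0 s) s) =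
      (LINT s:K|lebesgue. G (u0 s) s) + (LINT s:K|lebesgue. indicator S s *\<^sub>R G (v - u0 s) s)"
    using int(1) unfolding K_def by (simp add: set_integral_add(2))
  also have "(LINT s:K|lebesgue. indicator S s *\<^sub>R G (v - u0 s) s) = (LINT s:S|lebesgue. G (v - u0 s) s)"
    using S(2) unfolding set_lebesgue_integral_def K_def by (auto simp: indicator_def intro!: Bochner_Integration.integral_cong)
  moreover have "(LINT s:S|lebesgue. Phi 1 *v G (v - u0 s) s) = Phi 1 *v (LINT s:S|lebesgue. G (v - u0 s) s)"
    using integral_bounded_linear[OF matrix_vector_mul_bounded_linear,
        OF set_integrable_subset[OF int(2) S, unfolded set_integrable_def], of "Phi 1"]
    unfolding set_lebesgue_integral_def by (simp add: linear_scale[OF matrix_vector_mul_linear])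
  ultimately show ?thesis
    unfolding zvec_def G_def K_def by (simp add: matrix_vector_right_distrib)
qed

lemma objective_needle:
  fixes Phi :: "real \<Rightarrow> real^'n^'n" and B :: "real \<Rightarrow> real^'m^'n"
  defines "G \<equiv> \<lambda>w s. (matrix_inv (Phi s) ** B s) *v w"
  assumes grid: "\<And>i. i < N \<Longrightarrow> ts i < ts (Suc i)" and k: "k \<in> {1..N}"
    and S: "S \<in> sets lebesgue" "S \<subseteq> {ts (k - 1)..<ts k}"
    and int: "set_integrable lebesgue {ts (k - 1)..<ts k} (\<lambda>s. G (u0 s) s)"
      "set_integrable lebesgue {ts (k - 1)..<ts k} (\<lambda>s. G (v - u0 s) s)"
  shows "objective M N xi ts Phi B f x0 Q (\<lambda>t. if t \<in> S then v else u0 t) =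
    hfun M N xi ts Phi B f x0 Q u0 k (zvec Phi B ts u0 k + (LINT s:S|lebesgue. Phi 1 *v G (v - u0 s) s))"
proof -
  have "zvec Phi B ts (\<lambda>t. if t \<in> S then v else u0 t) i = zvec Phi B ts u0 i" if "i \<in> {1..N} - {k}" for i
    using partition_cells_disjoint[where N = N and ts = ts, OF grid k, of i] that S(2)
    by (intro zvec_cong) auto
  from objective_eq_hfun[OF k this] show ?thesis
    using zvec_needle[OF S int[unfolded G_def]] unfolding G_def by simp
qed

lemma adjoint_condition_on_cell:
  fixes A Phi :: "real \<Rightarrow> real^'n^'n" and B :: "real \<Rightarrow> real^'m^'n" and u0 :: "real \<Rightarrow> real^'m"
  assumes F: "is_fundamental_matrix A Phi" and A: "A absolutely_integrable_on {0..1}"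
    and B: "B absolutely_integrable_on {0..1}" and Bu0: "(\<lambda>s. B s *v u0 s) absolutely_integrable_on {0..1}"
    and grid: "\<And>i. i < N \<Longrightarrow> ts i < ts (Suc i)" "ts 0 = 0" "ts N = 1" and k: "k \<in> {1..N}"
    and adm: "admissible V u0" and v: "v \<in> V"
    and opt: "\<And>u. admissible V u \<Longrightarrow>
      objective M N xi ts Phi B f x0 Q u \<le> objective M N xi ts Phi B f x0 Q u0"
    and diff: "hfun M N xi ts Phi B f x0 Q u0 k differentiable (at (zvec Phi B ts u0 k))"
    and T: "is_adjoint_solution A (gradient (hfun M N xi ts Phi B f x0 Q u0 k) (zvec Phi B ts u0 k)) th"
  shows "{s \<in> {ts (k - 1)<..<ts k}. 0 < th s \<bullet> (B s *v (v - u0 s))} \<in> null_sets lebesgue"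
proof -
  define h where "h = hfun M N xi ts Phi B f x0 Q u0 k"
  define z where "z = zvec Phi B ts u0 k"
  define K where "K = {ts (k - 1)..<ts k}"
  define G where "G w s = (matrix_inv (Phi s) ** B s) *v w" for w s
  have "ts 0 \<le> ts (k - 1)" "ts k \<le> ts N"
    using k partition_le[where N = N and ts = ts, OF grid(1)] by auto
  then have K: "K \<subseteq> {0..1}" "{ts (k - 1)<..<ts k} \<subseteq> K" unfolding K_def using grid by auto
  have G01: "(\<lambda>s. G (w s) s) absolutely_integrable_on {0..1}"
    if "(\<lambda>s. B s *v w s) absolutely_integrable_on {0..1}" for w
    unfolding G_def by (rule absolutely_integrable_inverse_fundamental_mult[OF F A that])
  have G_int: "set_integrable lebesgue K (\<lambda>s. G (w s) s)"
    if "(\<lambda>s. B s *v w s) absolutely_integrable_on {0..1}" for w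
    by (rule set_integrable_subset[OF G01[OF that]]) (use K(1) in \<open>auto simp: K_def\<close>)
  have "(\<lambda>s. B s *v v) absolutely_integrable_on {0..1}"
    using absolutely_integrable_bilinear_continuous[OF bilinear_swap[OF bilinear_matrix_vector_mult]
          continuous_on_const _ B] by simp
  from set_integral_diff(1)[OF this Bu0]
  have Bvu0: "(\<lambda>s. B s *v (v - u0 s)) absolutely_integrable_on {0..1}"
    by (simp add: matrix_vector_mult_diff_distrib)
  define H where "H s = Phi 1 *v G (v - u0 s) s" for s
  have "H absolutely_integrable_on {0..1}"
    using absolutely_integrable_bilinear_continuous[OF bilinear_matrix_vector_mult continuous_on_const
        _ G01[OF Bvu0], of "Phi 1"] unfolding H_def by simp
  then have H: "set_integrable lebesgue {ts (k - 1)<..<ts k} H"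
    by (rule set_integrable_subset) (use K in auto)
  have "th s \<bullet> (B s *v (v - u0 s)) = gradient h z \<bullet> H s" if "s \<in> {ts (k - 1)<..<ts k}" for s
  proof -
    have "s \<in> {0..1}" using that K by blast
    from adjoint_inner_transport[OF F A T[folded h_def z_def] this, of "B s *v (v - u0 s)"]
    show ?thesis unfolding H_def G_def by (simp add: matrix_vector_mul_assoc matrix_mul_assoc)
  qed
  then have "{s \<in> {ts (k - 1)<..<ts k}. 0 < th s \<bullet> (B s *v (v - u0 s))} =
      {s \<in> {ts (k - 1)<..<ts k}. 0 < gradient h z \<bullet> H s}"
    by (intro Collect_cong) auto
  also have "\<dots> \<in> null_sets lebesgue"
  proof (rule needle_variation_null[OF gradient_has_derivative[OF diff[folded h_def z_def]] _ H])
    fix S assume S: "S \<in> sets lebesgue" "S \<subseteq> {ts (k - 1)<..<ts k}"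
    then have "S \<subseteq> {ts (k - 1)..<ts k}" using K(2) unfolding K_def by blast
    have "h (z + (LINT s:S|lebesgue. H s)) = objective M N xi ts Phi B f x0 Q (\<lambda>t. if t \<in> S then v else u0 t)"
      unfolding h_def z_def H_def G_def
      by (rule objective_needle[OF grid(1) k S(1) \<open>S \<subseteq> {ts (k - 1)..<ts k}\<close>
            G_int[OF Bu0, unfolded G_def K_def] G_int[OF Bvu0, unfolded G_def K_def], symmetric])
    also have "\<dots> \<le> objective M N xi ts Phi B f x0 Q u0" by (rule opt[OF admissible_needle[OF adm v S(1)]])
    also have "\<dots> = h z" unfolding h_def z_def by (rule objective_eq_hfun[OF k]) simp
    finally show "h (z + (LINT s:S|lebesgue. H s)) \<le> h z" .
  qed simp
  finally show ?thesis .
qed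

lemma is_arg_max_of_dense:
  fixes \<phi> :: "'a::topological_space \<Rightarrow> real"
  assumes "continuous_on UNIV \<phi>" "V \<subseteq> closure D" "x \<in> V" "\<And>w. w \<in> D \<Longrightarrow> \<phi> w \<le> \<phi> x"
  shows "is_arg_max \<phi> (\<lambda>v. v \<in> V) x"
proof -
  have "closed {w. \<phi> w \<le> \<phi> x}" by (intro closed_Collect_le assms(1) continuous_on_const)
  then have "closure D \<subseteq> {w. \<phi> w \<le> \<phi> x}" using assms(4) by (intro closure_minimal) auto
  then show ?thesis using assms(2,3) unfolding is_arg_max_def by force
qed

lemma is_arg_max_of_cell_conditions:
  fixes ts :: "nat \<Rightarrow> real" and \<theta> :: "nat \<Rightarrow> real^'n" and C :: "real^'m^'n"
  assumes grid: "\<And>i. i < N \<Longrightarrow> ts i < ts (Suc i)" "ts 0 = 0" "ts N = 1"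
    and t: "t \<in> {0..1}" "t \<notin> ts ` {0..N}"
    and D: "V \<subseteq> closure D" and "x \<in> V"
    and cond: "\<And>k w. k \<in> {1..N} \<Longrightarrow> w \<in> D \<Longrightarrow> t \<in> {ts (k - 1)<..<ts k} \<Longrightarrow>
      \<theta> k \<bullet> (C *v (w - x)) \<le> 0"
  shows "is_arg_max (\<lambda>v. (\<Sum>k\<in>{1..N}. indicator {ts (k - 1)..<ts k} t *\<^sub>R \<theta> k) \<bullet> (C *v v))
    (\<lambda>v. v \<in> V) x"
proof -
  have "\<exists>k\<in>{1..N}. ts (k - 1) < t \<and> t < ts k"
    by (rule partition_cell_exists[where N = N and ts = ts, OF grid(1)]) (use t grid(2,3) in auto)
  then obtain k where k: "k \<in> {1..N}" "ts (k - 1) < t" "t < ts k" by blast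
  then have "(\<Sum>k\<in>{1..N}. indicator {ts (k - 1)..<ts k} t *\<^sub>R \<theta> k) = \<theta> k"
    by (intro sum_indicator_partition_cells[where N = N and ts = ts, OF grid(1)]) auto
  moreover have "\<theta> k \<bullet> (C *v w) \<le> \<theta> k \<bullet> (C *v x)" if "w \<in> D" for w
    using cond[OF k(1) that] k by (simp add: matrix_vector_mult_diff_distrib inner_diff_right)
  ultimately show ?thesis
    by (auto intro!: is_arg_max_of_dense[OF _ D \<open>x \<in> V\<close>] continuous_intros)
qed

theorem theorem4:
  fixes M :: "'w measure"
    and N :: nat
    and xi :: "nat \<Rightarrow> 'w \<Rightarrow> real"
    and ts :: "nat \<Rightarrow> real"
    and A :: "real \<Rightarrow> real^'n^'n"
    and B :: "real \<Rightarrow> real^'m^'n"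
    and f :: "real \<Rightarrow> real^'n"
    and x0 :: "real^'n"
    and Q :: "(real^'n) set"
    and V :: "(real^'m) set"
    and Phi :: "real \<Rightarrow> real^'n^'n"
    and u0 :: "real \<Rightarrow> real^'m"
    and thetak :: "nat \<Rightarrow> real \<Rightarrow> real^'n"
  assumes "prob_space M" and "complete_measure M"
    and "\<And>i. i \<in> {1..N} \<Longrightarrow> xi i \<in> borel_measurable M"
    and "N \<ge> 1" and "ts 0 = 0" and "ts N = 1" and "\<And>i. i < N \<Longrightarrow> ts i < ts (Suc i)"
    and "\<And>i j. set_integrable lebesgue {0..1} (\<lambda>s. A s $ i $ j)"
    and "\<And>i j. set_integrable lebesgue {0..1} (\<lambda>s. B s $ i $ j)"
    and "\<And>i j. set_integrable lebesgue {0..1} (\<lambda>s. (B s $ i $ j)\<^sup>2)"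
    and "\<And>i. set_integrable lebesgue {0..1} (\<lambda>s. f s $ i)"
    and "Q \<in> sets borel"
    and "is_fundamental_matrix A Phi"
    and "admissible V u0"
    and "\<And>u. admissible V u \<Longrightarrow>
           objective M N xi ts Phi B f x0 Q u \<le> objective M N xi ts Phi B f x0 Q u0"
    and "regular_for M N xi ts Phi B f x0 Q u0"
    and "\<And>k. k \<in> {1..N} \<Longrightarrow> is_adjoint_solution A
           (gradient (hfun M N xi ts Phi B f x0 Q u0 k) (zvec Phi B ts u0 k)) (thetak k)"
  shows "AE t in lebesgue. t \<in> {0..1} \<longrightarrow>
           (let theta = (\<Sum>k\<in>{1..N}. indicator {ts (k - 1)..<ts k} t *\<^sub>R thetak k t)
            in is_arg_max (\<lambda>v. theta \<bullet> (B t *v v)) (\<lambda>v. v \<in> V) (u0 t))"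
proof -
  have A: "A absolutely_integrable_on {0..1}" and B: "B absolutely_integrable_on {0..1}"
    using assms(8,9) by (simp_all add: absolutely_integrable_on_cart_iff)
  have u0: "\<forall>t\<in>{0..1}. u0 t \<in> V" "set_borel_measurable lebesgue {0..1} u0"
    "set_integrable lebesgue {0..1::real} (\<lambda>t. (norm (u0 t))\<^sup>2)"
    using assms(14) unfolding admissible_def by auto
  have Bu0: "(\<lambda>s. B s *v u0 s) absolutely_integrable_on {0..1}"
    by (rule absolutely_integrable_matrix_vector_mult_L2[OF assms(9,10) u0(2,3)])
  obtain D where D: "countable D" "D \<subseteq> V" "V \<subseteq> closure D" using separable by blast
  have "AE t in lebesgue. \<forall>k\<in>{1..N}. \<forall>w\<in>D.
      t \<in> {ts (k - 1)<..<ts k} \<longrightarrow> thetak k t \<bullet> (B t *v (w - u0 t)) \<le> 0"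
    unfolding AE_ball_countable[OF countable_finite[OF finite_atLeastAtMost]] AE_ball_countable[OF D(1)]
  proof (intro ballI AE_I'[OF adjoint_condition_on_cell[OF assms(13) A B Bu0 assms(7,5,6) _ assms(14) _ assms(15)]])
    fix k w assume "k \<in> {1..N}" "w \<in> D"
    then show "k \<in> {1..N}" "w \<in> V" "hfun M N xi ts Phi B f x0 Q u0 k differentiable (at (zvec Phi B ts u0 k))"
      "is_adjoint_solution A (gradient (hfun M N xi ts Phi B f x0 Q u0 k) (zvec Phi B ts u0 k)) (thetak k)"
      using D(2) assms(16,17) unfolding regular_for_def by auto
  qed auto
  moreover have "AE t in lebesgue. t \<notin> ts ` {0..N}"
    by (rule AE_I'[OF null_sets_completionI[OF finite_imp_null_set_lborel[of "ts ` {0..N}"]]]) auto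
  ultimately show ?thesis
  proof eventually_elim
    case (elim t)
    show ?case unfolding Let_def
      by (intro impI is_arg_max_of_cell_conditions[OF assms(7,5,6) _ _ D(3)]) (use elim u0(1) in auto)
  qed
qed

end
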